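(* Let $F,K\ge1$ and $0\le Z<F$ be integers such that $\frac{K(F-Z)}{Z+1}$ is an integer, and suppose an RPDA$(F,K,Z)$ exists. Then an RPDA$(F,\ell K,Z)$ exists for every integer $\ell\ge1$.
   Context: A placement delivery array $S$-PDA$(F,K,Z)$ is an $F\times K$ array $R=(r_{j,k})$, $1\le j\le F$, $1\le k\le K$, over a finite set $S$ such that: (1) each cell is either empty or contains an element of $S$; (2) each column contains exactly $Z$ empty cells; (3) each element of $S$ occurs at most once in each row and at most once in each column; (4) if two distinct nonempty cells satisfy $r_{j_1,k_1}=r_{j_2,k_2}=t\in S$, then the cells $r_{j_1,k_2}$ and $r_{j_2,k_1}$ are empty. An RPDA$(F,K,Z)$ (restricted PDA) is an $S$-PDA$(F,K,Z)$ with $|S|=\left\lceil\frac{K(F-Z)}{Z+1}\right\rceil$. *)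

theory Defs
  imports Complex_Main
begin

text \<open>An F x K array over S is modelled as R :: nat => nat => 'a option, with rows
  0..<F and columns 0..<K; None is an empty cell, Some s a cell containing s.
  Values outside the index range are irrelevant.\<close>

definition is_PDA :: "'a set \<Rightarrow> nat \<Rightarrow> nat \<Rightarrow> nat \<Rightarrow> (nat \<Rightarrow> nat \<Rightarrow> 'a option) \<Rightarrow> bool" where
  "is_PDA S F K Z R \<longleftrightarrow>
     finite S \<and>
     (\<forall>j<F. \<forall>k<K. R j k = None \<or> (\<exists>s\<in>S. R j k = Some s)) \<and>
     (\<forall>k<K. card {j. j < F \<and> R j k = None} = Z) \<and>
     (\<forall>t\<in>S. \<forall>j<F. \<forall>k1<K. \<forall>k2<K. R j k1 = Some t \<and> R j k2 = Some t \<longrightarrow> k1 = k2) \<and>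
     (\<forall>t\<in>S. \<forall>k<K. \<forall>j1<F. \<forall>j2<F. R j1 k = Some t \<and> R j2 k = Some t \<longrightarrow> j1 = j2) \<and>
     (\<forall>t\<in>S. \<forall>j1<F. \<forall>j2<F. \<forall>k1<K. \<forall>k2<K.
        R j1 k1 = Some t \<and> R j2 k2 = Some t \<and> (j1, k1) \<noteq> (j2, k2) \<longrightarrow>
        R j1 k2 = None \<and> R j2 k1 = None)"

definition is_RPDA :: "'a set \<Rightarrow> nat \<Rightarrow> nat \<Rightarrow> nat \<Rightarrow> (nat \<Rightarrow> nat \<Rightarrow> 'a option) \<Rightarrow> bool" where
  "is_RPDA S F K Z R \<longleftrightarrow>
     is_PDA S F K Z R \<and>
     card S = nat \<lceil>real (K * (F - Z)) / real (Z + 1)\<rceil>"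

end

theory Submission
  imports Defs "HOL-Library.Nat_Bijection"
begin

text \<open>Place \<open>l\<close> copies of the array side by side, the \<open>c\<close>-th copy writing \<open>(c, s)\<close> for
  each symbol \<open>s\<close>. Every column keeps its \<open>Z\<close> empty cells, and since a symbol now occurs in
  a single copy only, the row, column and corner conditions reduce to those of the original
  array. The alphabet grows by the factor \<open>l\<close>, which matches the restricted size exactly
  because \<open>Z + 1\<close> divides \<open>K (F - Z)\<close>.\<close>

context
  fixes S F K Z R
  assumes P: "is_PDA S F K Z R"
begin

lemma is_PDA_finite: "finite S"
  using P unfolding is_PDA_def by blast

lemma is_PDA_entry_in: "j < F \<Longrightarrow> k < K \<Longrightarrow> R j k = Some s \<Longrightarrow> s \<in> S"
  using P unfolding is_PDA_def by (metis option.distinct(1) option.inject)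

lemma is_PDA_card_empty: "k < K \<Longrightarrow> card {j. j < F \<and> R j k = None} = Z"
  using P unfolding is_PDA_def by blast

lemma is_PDA_row_unique:
  "t \<in> S \<Longrightarrow> j < F \<Longrightarrow> k1 < K \<Longrightarrow> k2 < K \<Longrightarrow>
    R j k1 = Some t \<Longrightarrow> R j k2 = Some t \<Longrightarrow> k1 = k2"
  using P unfolding is_PDA_def by blast

lemma is_PDA_column_unique:
  "t \<in> S \<Longrightarrow> k < K \<Longrightarrow> j1 < F \<Longrightarrow> j2 < F \<Longrightarrow>
    R j1 k = Some t \<Longrightarrow> R j2 k = Some t \<Longrightarrow> j1 = j2"
  using P unfolding is_PDA_def by blast

lemma is_PDA_opposite_corners:
  "t \<in> S \<Longrightarrow> j1 < F \<Longrightarrow> j2 < F \<Longrightarrow> k1 < K \<Longrightarrow> k2 < K \<Longrightarrow>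
    R j1 k1 = Some t \<Longrightarrow> R j2 k2 = Some t \<Longrightarrow> (j1, k1) \<noteq> (j2, k2) \<Longrightarrow>
    R j1 k2 = None \<and> R j2 k1 = None"
  using P unfolding is_PDA_def by blast

end

lemma is_PDA_replicate:
  assumes P: "is_PDA S F K Z R"
  shows "is_PDA ({..<l} \<times> S) F (l * K) Z (\<lambda>j k. map_option (Pair (k div K)) (R j (k mod K)))"
    (is "is_PDA ?S F (l * K) Z ?R")
proof -
  have block: "k mod K < K" "k div K < l" if "k < l * K" for k
  proof -
    from that have "K > 0" by (cases "K = 0") simp_all
    then show "k mod K < K" by simp
    show "k div K < l" using that by (rule less_mult_imp_div_less)
  qed
  have col_eq: "k1 = k2 \<longleftrightarrow> k1 div K = k2 div K \<and> k1 mod K = k2 mod K" for k1 k2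
    by (metis div_mult_mod_eq)
  have Some_iff: "?R j k = Some (c, t) \<longleftrightarrow> c = k div K \<and> R j (k mod K) = Some t" for j k c t
    by auto
  show ?thesis
    unfolding is_PDA_def
  proof (intro conjI ballI allI impI)
    show "finite ?S" using is_PDA_finite[OF P] by simp
  next
    fix j k assume "j < F" "k < l * K"
    then show "?R j k = None \<or> (\<exists>s\<in>?S. ?R j k = Some s)"
      using is_PDA_entry_in[OF P, of j "k mod K"] block[of k] by (cases "R j (k mod K)") auto
  next
    fix k assume "k < l * K"
    then show "card {j. j < F \<and> ?R j k = None} = Z"
      using is_PDA_card_empty[OF P] block by simp
  next
    fix t j k1 k2 assume "t \<in> ?S" and "j < F" "k1 < l * K" "k2 < l * K"
      and "?R j k1 = Some t \<and> ?R j k2 = Some t"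
    moreover obtain c s where "t = (c, s)" by fastforce
    ultimately have "s \<in> S" "k1 div K = k2 div K"
      "R j (k1 mod K) = Some s" "R j (k2 mod K) = Some s"
      by (auto simp: Some_iff)
    with \<open>j < F\<close> block[OF \<open>k1 < l * K\<close>] block[OF \<open>k2 < l * K\<close>]
    show "k1 = k2"
      using is_PDA_row_unique[OF P] col_eq by blast
  next
    fix t k j1 j2 assume "t \<in> ?S" "k < l * K" "j1 < F" "j2 < F"
      and "?R j1 k = Some t \<and> ?R j2 k = Some t"
    moreover obtain c s where "t = (c, s)" by fastforce
    ultimately have "s \<in> S" "R j1 (k mod K) = Some s" "R j2 (k mod K) = Some s"
      by (auto simp: Some_iff)
    with \<open>j1 < F\<close> \<open>j2 < F\<close> block[OF \<open>k < l * K\<close>]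
    show "j1 = j2"
      using is_PDA_column_unique[OF P] by blast
  next
    fix t j1 j2 k1 k2 assume "t \<in> ?S" "j1 < F" "j2 < F" "k1 < l * K" "k2 < l * K"
      and "?R j1 k1 = Some t \<and> ?R j2 k2 = Some t \<and> (j1, k1) \<noteq> (j2, k2)"
    moreover obtain c s where "t = (c, s)" by fastforce
    ultimately have s: "s \<in> S" "R j1 (k1 mod K) = Some s" "R j2 (k2 mod K) = Some s"
      and "k1 div K = k2 div K" "(j1, k1) \<noteq> (j2, k2)"
      by (auto simp: Some_iff)
    then have "(j1, k1 mod K) \<noteq> (j2, k2 mod K)"
      using col_eq by blast
    then have "R j1 (k2 mod K) = None \<and> R j2 (k1 mod K) = None"
      using is_PDA_opposite_corners[OF P s(1) \<open>j1 < F\<close> \<open>j2 < F\<close>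
          block(1)[OF \<open>k1 < l * K\<close>] block(1)[OF \<open>k2 < l * K\<close>] s(2,3)]
      by blast
    then show "?R j1 k2 = None" and "?R j2 k1 = None"
      by simp_all
  qed
qed

lemma is_PDA_map_inj:
  assumes P: "is_PDA S F K Z R" and f: "inj_on f S"
  shows "is_PDA (f ` S) F K Z (\<lambda>j k. map_option f (R j k))"
    (is "is_PDA _ F K Z ?R")
proof -
  have Some_iff: "?R j k = Some (f s) \<longleftrightarrow> R j k = Some s"
    if "j < F" "k < K" "s \<in> S" for j k s
    using is_PDA_entry_in[OF P that(1,2)] inj_onD[OF f] that(3) by (cases "R j k") auto
  show ?thesis
    unfolding is_PDA_def
  proof (intro conjI ballI allI impI)
    show "finite (f ` S)"
      using is_PDA_finite[OF P] by simp
  next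
    fix j k assume "j < F" "k < K"
    then show "?R j k = None \<or> (\<exists>t\<in>f ` S. ?R j k = Some t)"
      using is_PDA_entry_in[OF P] by (cases "R j k") auto
  next
    fix k assume "k < K"
    then show "card {j. j < F \<and> ?R j k = None} = Z"
      using is_PDA_card_empty[OF P] by simp
  next
    fix t j k1 k2 assume "t \<in> f ` S" "j < F" "k1 < K" "k2 < K"
      and "?R j k1 = Some t \<and> ?R j k2 = Some t"
    then show "k1 = k2"
      using is_PDA_row_unique[OF P] Some_iff by blast
  next
    fix t k j1 j2 assume "t \<in> f ` S" "k < K" "j1 < F" "j2 < F"
      and "?R j1 k = Some t \<and> ?R j2 k = Some t"
    then show "j1 = j2"
      using is_PDA_column_unique[OF P] Some_iff by blast
  next
    fix t j1 j2 k1 k2 assume "t \<in> f ` S" "j1 < F" "j2 < F" "k1 < K" "k2 < K"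
      and "?R j1 k1 = Some t \<and> ?R j2 k2 = Some t \<and> (j1, k1) \<noteq> (j2, k2)"
    then have "R j1 k2 = None \<and> R j2 k1 = None"
      using is_PDA_opposite_corners[OF P] Some_iff by blast
    then show "?R j1 k2 = None" and "?R j2 k1 = None"
      by simp_all
  qed
qed

lemma is_RPDA_iff_card:
  assumes "(Z + 1) dvd K * (F - Z)"
  shows "is_RPDA S F K Z R \<longleftrightarrow> is_PDA S F K Z R \<and> card S = K * (F - Z) div (Z + 1)"
proof -
  have "real (K * (F - Z)) / real (Z + 1) = real (K * (F - Z) div (Z + 1))"
    using real_of_nat_div[OF assms] by simp
  then show ?thesis
    unfolding is_RPDA_def by (simp only: ceiling_of_nat nat_int)
qed

lemma is_RPDA_replicate:
  assumes dvd: "(Z + 1) dvd K * (F - Z)" and R: "is_RPDA S F K Z R"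
  shows "is_RPDA (prod_encode ` ({..<l} \<times> S)) F (l * K) Z
    (\<lambda>j k. map_option (prod_encode \<circ> Pair (k div K)) (R j (k mod K)))"
proof -
  from R dvd have P: "is_PDA S F K Z R" and card_S: "card S = K * (F - Z) div (Z + 1)"
    by (simp_all add: is_RPDA_iff_card)
  have "is_PDA (prod_encode ` ({..<l} \<times> S)) F (l * K) Z
      (\<lambda>j k. map_option prod_encode (map_option (Pair (k div K)) (R j (k mod K))))"
    by (rule is_PDA_map_inj[OF is_PDA_replicate[OF P] inj_prod_encode])
  moreover have "card (prod_encode ` ({..<l} \<times> S)) = l * K * (F - Z) div (Z + 1)"
    using card_image[OF inj_prod_encode] dvd
    by (simp add: card_cartesian_product card_S div_mult_swap mult.assoc)
  ultimately show ?thesis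
    using dvd_mult[OF dvd, of l] by (simp add: is_RPDA_iff_card option.map_comp mult.assoc)
qed

theorem mainTheorem7:
  fixes F K Z :: nat
  assumes "F \<ge> 1" and "K \<ge> 1" and "Z < F"
    and "(Z + 1) dvd K * (F - Z)"
    and "\<exists>(S :: nat set) R. is_RPDA S F K Z R"
  shows "\<forall>l::nat. l \<ge> 1 \<longrightarrow> (\<exists>(S :: nat set) R. is_RPDA S F (l * K) Z R)"
proof (intro allI impI)
  fix l :: nat
  from assms(5) obtain S :: "nat set" and R where "is_RPDA S F K Z R" by blast
  then show "\<exists>(S :: nat set) R. is_RPDA S F (l * K) Z R"
    using is_RPDA_replicate[OF assms(4)] by blast
qed

end
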